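(* Let $n\ge1$ be an integer and let $k\in\mathbb{R}\setminus B_n$. Then there is a unique pair $(a,b)\in\mathbb{R}^2$ with $(a,b)\neq(0,0)$ satisfying both $S^{(a,b)}_{k,n+1}-S^{(a,b)}_{k,n}=bk-2b+a$ and $4a^3+27b^2=0$; namely $a=-\frac{27(F_n(k)-1)^2}{4(G_n(k)-k+2)^2}$, $b=\frac{27(F_n(k)-1)^3}{4(G_n(k)-k+2)^3}$.
   Context: For real $k,a,b$, the generalized $k$-FL sequence is $S^{(a,b)}_{k,0}=2b$, $S^{(a,b)}_{k,1}=bk+a$, $S^{(a,b)}_{k,m}=kS^{(a,b)}_{k,m-1}+S^{(a,b)}_{k,m-2}$ ($m\ge2$). Define $f_m,g_m\in\mathbb{Z}[T]$ by $f_0=0,f_1=1,g_0=2,g_1=T$, $f_m=Tf_{m-1}+f_{m-2}$, $g_m=Tg_{m-1}+g_{m-2}$, and set $F_n=f_{n+1}-f_n$, $G_n=g_{n+1}-g_n$, so that $S^{(a,b)}_{k,n+1}-S^{(a,b)}_{k,n}=F_n(k)a+G_n(k)b$. Let $B_n=\{k\in\mathbb{R}: F_n(k)-1=0 \text{ or } G_n(k)-k+2=0\}$. *)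

theory Defs
  imports "HOL-Computational_Algebra.Polynomial"
begin

fun S :: "real \<Rightarrow> real \<Rightarrow> real \<Rightarrow> nat \<Rightarrow> real" where
  "S a b k 0 = 2 * b"
| "S a b k (Suc 0) = b * k + a"
| "S a b k (Suc (Suc m)) = k * S a b k (Suc m) + S a b k m"

fun fpoly :: "nat \<Rightarrow> int poly" where
  "fpoly 0 = 0"
| "fpoly (Suc 0) = 1"
| "fpoly (Suc (Suc m)) = [:0, 1:] * fpoly (Suc m) + fpoly m"

fun gpoly :: "nat \<Rightarrow> int poly" where
  "gpoly 0 = [:2:]"
| "gpoly (Suc 0) = [:0, 1:]"
| "gpoly (Suc (Suc m)) = [:0, 1:] * gpoly (Suc m) + gpoly m"

definition Fpoly :: "nat \<Rightarrow> int poly" where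
  "Fpoly n = fpoly (Suc n) - fpoly n"

definition Gpoly :: "nat \<Rightarrow> int poly" where
  "Gpoly n = gpoly (Suc n) - gpoly n"

definition Fev :: "nat \<Rightarrow> real \<Rightarrow> real" where
  "Fev n k = poly (map_poly of_int (Fpoly n)) k"

definition Gev :: "nat \<Rightarrow> real \<Rightarrow> real" where
  "Gev n k = poly (map_poly of_int (Gpoly n)) k"

definition Bset :: "nat \<Rightarrow> real set" where
  "Bset n = {k. Fev n k - 1 = 0 \<or> Gev n k - k + 2 = 0}"

end

theory Submission
  imports Defs
begin

text \<open>The difference equation is the linear relation \<open>(F\<^sub>n(k) - 1) a + (G\<^sub>n(k) - k + 2) b = 0\<close>,
  a line through the origin with nonzero coefficients. Substituting \<open>a = -(q/p) b\<close> into the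
  cusp equation \<open>4a\<^sup>3 + 27b\<^sup>2 = 0\<close> leaves \<open>b\<^sup>2 (27 - 4 q\<^sup>3 b / p\<^sup>3) = 0\<close>, whose only nonzero
  root gives the unique point.\<close>

lemma map_poly_of_int_add:
  "map_poly (of_int :: int \<Rightarrow> 'a::ring_1) (p + q) = map_poly of_int p + map_poly of_int q"
  by (intro poly_eqI) (simp add: coeff_map_poly)

lemma map_poly_of_int_diff:
  "map_poly (of_int :: int \<Rightarrow> 'a::ring_1) (p - q) = map_poly of_int p - map_poly of_int q"
  by (intro poly_eqI) (simp add: coeff_map_poly)

lemma S_eq_fpoly_gpoly:
  "S a b k m = poly (map_poly of_int (fpoly m)) k * a + poly (map_poly of_int (gpoly m)) k * b"
  by (induction a b k m rule: S.induct)
     (auto simp: map_poly_of_int_add map_poly_pCons algebra_simps)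

lemma S_Suc_diff: "S a b k (n + 1) - S a b k n = Fev n k * a + Gev n k * b"
  by (simp add: S_eq_fpoly_gpoly Fev_def Gev_def Fpoly_def Gpoly_def map_poly_of_int_diff
      algebra_simps)

lemma line_cusp_nonzero_point_iff:
  fixes p q a b :: "'a::field_char_0"
  assumes "p \<noteq> 0" and "q \<noteq> 0"
  shows "(a, b) \<noteq> (0, 0) \<and> p * a + q * b = 0 \<and> 4 * a ^ 3 + 27 * b ^ 2 = 0 \<longleftrightarrow>
         a = - (27 * p ^ 2) / (4 * q ^ 2) \<and> b = 27 * p ^ 3 / (4 * q ^ 3)"
proof
  assume "(a, b) \<noteq> (0, 0) \<and> p * a + q * b = 0 \<and> 4 * a ^ 3 + 27 * b ^ 2 = 0"
  then have nonzero: "(a, b) \<noteq> (0, 0)" and line: "p * a + q * b = 0"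
    and cusp: "4 * a ^ 3 + 27 * b ^ 2 = 0" by auto
  from line have "p * a = - (q * b)" by (simp add: eq_neg_iff_add_eq_0)
  then have a: "a = - q * b / p" using assms by (simp add: field_simps)
  with nonzero have "b \<noteq> 0" by auto
  have "b ^ 2 * (27 - 4 * q ^ 3 * b / p ^ 3) = 0"
    using cusp assms unfolding a by (simp add: field_simps power3_eq_cube power2_eq_square)
  with \<open>b \<noteq> 0\<close> have b: "b = 27 * p ^ 3 / (4 * q ^ 3)"
    using assms by (simp add: field_simps)
  have "a = - (27 * p ^ 2) / (4 * q ^ 2)"
    unfolding a b using assms by (simp add: field_simps power3_eq_cube power2_eq_square)
  with b show "a = - (27 * p ^ 2) / (4 * q ^ 2) \<and> b = 27 * p ^ 3 / (4 * q ^ 3)" by simp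
next
  assume "a = - (27 * p ^ 2) / (4 * q ^ 2) \<and> b = 27 * p ^ 3 / (4 * q ^ 3)"
  then have a: "a = - (27 * p ^ 2) / (4 * q ^ 2)" and b: "b = 27 * p ^ 3 / (4 * q ^ 3)" by auto
  have "b \<noteq> 0" using assms unfolding b by simp
  moreover have "p * a + q * b = 0" and "4 * a ^ 3 + 27 * b ^ 2 = 0"
    using assms unfolding a b by (simp_all add: field_simps power3_eq_cube power2_eq_square)
  ultimately show "(a, b) \<noteq> (0, 0) \<and> p * a + q * b = 0 \<and> 4 * a ^ 3 + 27 * b ^ 2 = 0"
    by simp
qed

theorem lemma3p6:
  fixes n :: nat and k :: real
  assumes "n \<ge> 1" and "k \<notin> Bset n"
  shows "{(a :: real, b :: real). (a, b) \<noteq> (0, 0) \<and>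
            S a b k (n + 1) - S a b k n = b * k - 2 * b + a \<and>
            4 * a ^ 3 + 27 * b ^ 2 = 0}
         = {(- (27 * (Fev n k - 1) ^ 2) / (4 * (Gev n k - k + 2) ^ 2),
              27 * (Fev n k - 1) ^ 3 / (4 * (Gev n k - k + 2) ^ 3))}"
proof -
  have "Fev n k - 1 \<noteq> 0" and "Gev n k - k + 2 \<noteq> 0"
    using assms(2) by (auto simp: Bset_def)
  note point_iff = line_cusp_nonzero_point_iff[OF this]
  have "S a b k (n + 1) - S a b k n = b * k - 2 * b + a \<longleftrightarrow>
      (Fev n k - 1) * a + (Gev n k - k + 2) * b = 0" for a b
    unfolding S_Suc_diff by (auto simp: algebra_simps)
  then show ?thesis
    using point_iff by auto
qed

end
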